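(* Let $\Omega\subset\mathbb{C}$ be a bounded domain whose boundary consists of $n$ disjoint Jordan curves, let $V_0,\dots,V_{n-1}$ be the connected components of $\hat{\mathbb{C}}\setminus\Omega$ with $\infty\in V_0$, let $\Omega_i=\hat{\mathbb{C}}\setminus V_i$, and let $\phi_i:\overline{D}\to\overline{\Omega_i}$ be Riemann mappings ($i=0,\dots,n-1$). For every $k\in\mathbb{N}$ and $i\in\{0,\dots,n-1\}$, the set $$E^{(i)}_k=\{f\in A(\Omega):\operatorname{Re}(f\circ\phi_i)\restriction_{\mathbb{T}}\in D_k\}$$ is an open subset of $A(\Omega)$.
   Context: $D$ is the open unit disc, $\mathbb{T}=\partial D$. A Riemann mapping $\phi_i:\overline{D}\to\overline{\Omega_i}$ (closure in $\hat{\mathbb{C}}$) is a homeomorphism mapping $D$ conformally onto $\Omega_i$; note $\phi_i(\mathbb{T})=\partial V_i\subset\partial\Omega$. $A(\Omega)$ is the space of functions continuous on $\overline{\Omega}$ and holomorphic on $\Omega$, with the supremum norm on $\overline{\Omega}$. Functions on $\mathbb{T}$ are identified with $2\pi$-periodic functions on $\mathbb{R}$ via $y\mapsto e^{iy}$. For $k\in\mathbb{N}$, $D_k$ is the set of real continuous functions $u$ on $\mathbb{T}$ such that for every $\theta\in\mathbb{R}$ there exists $y\in(\theta,\theta+\frac1k)$ with $|u(y)-u(\theta)|>k|y-\theta|$. *)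

theory Defs
  imports "HOL-Complex_Analysis.Complex_Analysis"
begin

definition A_alg :: "complex set \<Rightarrow> (complex \<Rightarrow> complex) set" where
  "A_alg \<Omega> = {f. continuous_on (closure \<Omega>) f \<and> f holomorphic_on \<Omega>}"

definition sup_dist :: "complex set \<Rightarrow> (complex \<Rightarrow> complex) \<Rightarrow> (complex \<Rightarrow> complex) \<Rightarrow> real" where
  "sup_dist \<Omega> f g = (SUP z\<in>closure \<Omega>. cmod (f z - g z))"

definition open_in_A :: "complex set \<Rightarrow> (complex \<Rightarrow> complex) set \<Rightarrow> bool" where
  "open_in_A \<Omega> E \<longleftrightarrow> E \<subseteq> A_alg \<Omega> \<and>
     (\<forall>f\<in>E. \<exists>\<epsilon>>0. \<forall>g\<in>A_alg \<Omega>. sup_dist \<Omega> f g < \<epsilon> \<longrightarrow> g \<in> E)"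

definition D_set :: "nat \<Rightarrow> (complex \<Rightarrow> real) set" where
  "D_set k = {u. continuous_on (sphere 0 1) u \<and>
     (\<forall>\<theta>::real. \<exists>y. \<theta> < y \<and> y < \<theta> + 1 / real k \<and>
         \<bar>u (cis y) - u (cis \<theta>)\<bar> > real k * \<bar>y - \<theta>\<bar>)}"

text \<open>Riemann mapping of the closed disc onto the closure of a bounded simply
  connected domain U: a homeomorphism (continuous injection of a compact space)
  of the closed disc onto closure U, mapping the open disc conformally onto U.\<close>
definition riemann_map_bdd :: "(complex \<Rightarrow> complex) \<Rightarrow> complex set \<Rightarrow> bool" where
  "riemann_map_bdd \<phi> U \<longleftrightarrow>
     continuous_on (cball 0 1) \<phi> \<and> inj_on \<phi> (cball 0 1) \<and>
     \<phi> ` cball 0 1 = closure U \<and> \<phi> ` ball 0 1 = U \<and> \<phi> holomorphic_on ball 0 1"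

text \<open>Riemann mapping of the closed disc onto the closure (in the Riemann sphere) of
  U \<union> {\<infinity>}, where U \<subseteq> \<complex> is the finite part: the point p of the open disc is
  sent to \<infinity> (expressed by the limit condition), the rest of the closed disc is
  mapped continuously and injectively onto closure U, and the open disc minus p
  conformally onto U.  The value of the function at p is irrelevant.\<close>
definition riemann_map_unbdd :: "(complex \<Rightarrow> complex) \<Rightarrow> complex \<Rightarrow> complex set \<Rightarrow> bool" where
  "riemann_map_unbdd \<phi> p U \<longleftrightarrow> p \<in> ball 0 1 \<and>
     continuous_on (cball 0 1 - {p}) \<phi> \<and> inj_on \<phi> (cball 0 1 - {p}) \<and>
     \<phi> ` (cball 0 1 - {p}) = closure U \<and> \<phi> ` (ball 0 1 - {p}) = U \<and>
     \<phi> holomorphic_on (ball 0 1 - {p}) \<and> filterlim \<phi> at_infinity (at p)"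

end

theory Submission
  imports Defs
begin

text \<open>Membership in D_k is an open condition on the trace: by compactness of one period the
  escape inequality |u y - u \<theta>| > k |y - \<theta>| holds with a uniform margin \<delta> > 0, so it survives
  every perturbation of u by less than \<delta>/2. Sup-norm closeness in A(\<Omega>) controls the trace
  Re (f \<circ> \<phi> i) on the circle because the injective \<phi> i maps the circle onto the frontier of
  V i, which lies in the closure of \<Omega> as soon as -\<Omega> has finitely many components.\<close>

lemma periodic_escape_uniform_margin:
  fixes U :: "real \<Rightarrow> real" and T r k :: real
  assumes cont: "continuous_on UNIV U" and T: "T > 0"
    and periodic: "\<And>x j. U (x + of_int j * T) = U x"
    and escape: "\<forall>\<theta>. \<exists>y. \<theta> < y \<and> y < \<theta> + r \<and> \<bar>U y - U \<theta>\<bar> > k * \<bar>y - \<theta>\<bar>"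
  shows "\<exists>\<delta>>0. \<forall>\<theta>. \<exists>y. \<theta> < y \<and> y < \<theta> + r \<and> \<bar>U y - U \<theta>\<bar> > k * \<bar>y - \<theta>\<bar> + \<delta>"
proof -
  from escape obtain Y where Y: "\<And>\<theta>. \<theta> < Y \<theta> \<and> Y \<theta> < \<theta> + r \<and> \<bar>U (Y \<theta>) - U \<theta>\<bar> > k * \<bar>Y \<theta> - \<theta>\<bar>"
    by metis
  define M where "M \<theta> = \<bar>U (Y \<theta>) - U \<theta>\<bar> - k * (Y \<theta> - \<theta>)" for \<theta>
  have M_pos: "M \<theta> > 0" for \<theta> using Y[of \<theta>] by (auto simp: M_def)
  text \<open>The witness Y \<theta> still serves, with margin M \<theta> / 2, for every t in an open
    neighbourhood of \<theta>; finitely many of these cover a period.\<close>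
  define N where "N \<theta> = {t. Y \<theta> - r < t} \<inter> {t. t < Y \<theta>} \<inter>
      {t. M \<theta> / 2 < \<bar>U (Y \<theta>) - U t\<bar> - k * (Y \<theta> - t)}" for \<theta>
  have N_open: "open (N \<theta>)" for \<theta>
    unfolding N_def
    by (intro open_Int open_Collect_less continuous_intros continuous_on_compose2[OF cont]) auto
  have N_centre: "\<theta> \<in> N \<theta>" for \<theta> using Y[of \<theta>] M_pos[of \<theta>] by (auto simp: N_def M_def)
  obtain F where F: "F \<subseteq> {0..T}" "finite F" "{0..T} \<subseteq> (\<Union>c\<in>F. N c)"
    by (rule compactE_image[OF compact_Icc, where f = N]) (use N_open N_centre in auto)
  have "F \<noteq> {}" using F(3) T by fastforce
  define \<delta> where "\<delta> = Min ((\<lambda>c. M c / 2) ` F)"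
  have \<delta>_pos: "\<delta> > 0" unfolding \<delta>_def using F(2) \<open>F \<noteq> {}\<close> M_pos by (subst Min_gr_iff) auto
  have \<delta>_le: "\<delta> \<le> M c / 2" if "c \<in> F" for c unfolding \<delta>_def using F(2) that by (intro Min_le) auto
  have "\<exists>y. \<theta> < y \<and> y < \<theta> + r \<and> \<bar>U y - U \<theta>\<bar> > k * \<bar>y - \<theta>\<bar> + \<delta>" for \<theta>
  proof -
    define j where "j = \<lfloor>\<theta> / T\<rfloor>"
    define \<theta>\<^sub>0 where "\<theta>\<^sub>0 = \<theta> - of_int j * T"
    have "of_int j \<le> \<theta> / T" "\<theta> / T < of_int j + 1" unfolding j_def by linarith+
    with T have "\<theta>\<^sub>0 \<in> {0..T}" unfolding \<theta>\<^sub>0_def by (simp add: field_simps)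
    with F(3) obtain c where c: "c \<in> F" "\<theta>\<^sub>0 \<in> N c" by auto
    from c(2) have "Y c - r < \<theta>\<^sub>0" "\<theta>\<^sub>0 < Y c"
      and margin: "M c / 2 < \<bar>U (Y c) - U \<theta>\<^sub>0\<bar> - k * (Y c - \<theta>\<^sub>0)"
      by (auto simp: N_def)
    define y where "y = Y c + of_int j * T"
    have "y - \<theta> = Y c - \<theta>\<^sub>0" by (simp add: y_def \<theta>\<^sub>0_def)
    moreover have "U y = U (Y c)" "U \<theta> = U \<theta>\<^sub>0"
      using periodic[of "Y c" j] periodic[of \<theta>\<^sub>0 j] by (simp_all add: y_def \<theta>\<^sub>0_def)
    ultimately have "\<theta> < y \<and> y < \<theta> + r \<and> \<bar>U y - U \<theta>\<bar> > k * \<bar>y - \<theta>\<bar> + \<delta>"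
      using \<open>Y c - r < \<theta>\<^sub>0\<close> \<open>\<theta>\<^sub>0 < Y c\<close> margin \<delta>_le[OF c(1)] by simp
    then show ?thesis by blast
  qed
  with \<delta>_pos show ?thesis by blast
qed

lemma D_set_uniform_margin:
  assumes "u \<in> D_set k"
  shows "\<exists>\<delta>>0. \<forall>\<theta>. \<exists>y. \<theta> < y \<and> y < \<theta> + 1 / real k \<and>
           \<bar>u (cis y) - u (cis \<theta>)\<bar> > real k * \<bar>y - \<theta>\<bar> + \<delta>"
proof (rule periodic_escape_uniform_margin)
  from assms have "continuous_on (sphere 0 1) u" by (simp add: D_set_def)
  then show "continuous_on UNIV (\<lambda>t. u (cis t))"
    by (rule continuous_on_compose2) (auto intro: continuous_intros)
  show "u (cis (x + of_int j * (2 * pi))) = u (cis x)" for x j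
  proof -
    have "cis (x + of_int j * (2 * pi)) = cis x * cis (2 * pi * of_int j)"
      by (simp add: cis_mult mult.commute)
    then show ?thesis by simp
  qed
  from assms show "\<forall>\<theta>. \<exists>y. \<theta> < y \<and> y < \<theta> + 1 / real k \<and> \<bar>u (cis y) - u (cis \<theta>)\<bar> > real k * \<bar>y - \<theta>\<bar>"
    by (simp add: D_set_def)
qed simp

lemma D_set_open_sup:
  assumes "u \<in> D_set k"
  shows "\<exists>\<epsilon>>0. \<forall>v. continuous_on (sphere 0 1) v \<longrightarrow>
           (\<forall>z\<in>sphere 0 1. \<bar>v z - u z\<bar> < \<epsilon>) \<longrightarrow> v \<in> D_set k"
proof -
  obtain \<delta> where "\<delta> > 0" and margin: "\<forall>\<theta>. \<exists>y. \<theta> < y \<and> y < \<theta> + 1 / real k \<and>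
      \<bar>u (cis y) - u (cis \<theta>)\<bar> > real k * \<bar>y - \<theta>\<bar> + \<delta>"
    using D_set_uniform_margin[OF assms] by blast
  have "v \<in> D_set k" if "continuous_on (sphere 0 1) v"
      and close: "\<forall>z\<in>sphere 0 1. \<bar>v z - u z\<bar> < \<delta> / 2" for v
  proof -
    have "\<exists>y. \<theta> < y \<and> y < \<theta> + 1 / real k \<and> \<bar>v (cis y) - v (cis \<theta>)\<bar> > real k * \<bar>y - \<theta>\<bar>"
      for \<theta>
    proof -
      obtain y where y: "\<theta> < y" "y < \<theta> + 1 / real k"
          "\<bar>u (cis y) - u (cis \<theta>)\<bar> > real k * \<bar>y - \<theta>\<bar> + \<delta>"
        using margin by blast
      moreover have "\<bar>v (cis y) - u (cis y)\<bar> < \<delta> / 2" "\<bar>v (cis \<theta>) - u (cis \<theta>)\<bar> < \<delta> / 2"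
        using close by auto
      ultimately show ?thesis by (intro exI[of _ y]) linarith
    qed
    with that(1) show ?thesis by (simp add: D_set_def)
  qed
  with \<open>\<delta> > 0\<close> show ?thesis by (intro exI[of _ "\<delta> / 2"]) auto
qed

lemma norm_le_sup_dist:
  assumes "bounded \<Omega>" "continuous_on (closure \<Omega>) f" "continuous_on (closure \<Omega>) g"
    and "z \<in> closure \<Omega>"
  shows "cmod (f z - g z) \<le> sup_dist \<Omega> f g"
proof -
  have "compact ((\<lambda>z. cmod (f z - g z)) ` closure \<Omega>)"
    using assms by (intro compact_continuous_image continuous_intros) auto
  then have "bdd_above ((\<lambda>z. cmod (f z - g z)) ` closure \<Omega>)"
    by (simp add: bounded_imp_bdd_above compact_imp_bounded)
  with assms(4) show ?thesis unfolding sup_dist_def by (rule cSUP_upper)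
qed

lemma open_in_A_Re_trace_D_set:
  assumes "bounded \<Omega>" and \<psi>: "continuous_on (sphere 0 1) \<psi>" "\<psi> ` sphere 0 1 \<subseteq> closure \<Omega>"
  shows "open_in_A \<Omega> {f \<in> A_alg \<Omega>. (\<lambda>z. Re (f (\<psi> z))) \<in> D_set k}"
    (is "open_in_A \<Omega> ?E")
proof -
  have trace_cont: "continuous_on (sphere 0 1) (\<lambda>z. Re (f (\<psi> z)))" if "f \<in> A_alg \<Omega>" for f
  proof -
    have "continuous_on (closure \<Omega>) f" using that by (simp add: A_alg_def)
    then have "continuous_on (sphere 0 1) (f \<circ> \<psi>)"
      using \<psi> by (intro continuous_on_compose) (auto intro: continuous_on_subset)
    then show ?thesis using continuous_on_Re by (auto simp: o_def)
  qed
  have nbhd: "\<exists>\<epsilon>>0. \<forall>g\<in>A_alg \<Omega>. sup_dist \<Omega> f g < \<epsilon> \<longrightarrow> g \<in> ?E" if f: "f \<in> ?E" for f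
  proof -
    from f have "(\<lambda>z. Re (f (\<psi> z))) \<in> D_set k" by simp
    from D_set_open_sup[OF this] obtain \<epsilon> where "\<epsilon> > 0" and stable: "\<forall>v. continuous_on (sphere 0 1) v \<longrightarrow>
        (\<forall>z\<in>sphere 0 1. \<bar>v z - Re (f (\<psi> z))\<bar> < \<epsilon>) \<longrightarrow> v \<in> D_set k"
      by blast
    have "g \<in> ?E" if g: "g \<in> A_alg \<Omega>" "sup_dist \<Omega> f g < \<epsilon>" for g
    proof -
      have close: "\<forall>z\<in>sphere 0 1. \<bar>Re (g (\<psi> z)) - Re (f (\<psi> z))\<bar> < \<epsilon>"
      proof
        fix z :: complex assume "z \<in> sphere 0 1"
        have "\<bar>Re (f (\<psi> z)) - Re (g (\<psi> z))\<bar> \<le> cmod (f (\<psi> z) - g (\<psi> z))"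
          using abs_Re_le_cmod[of "f (\<psi> z) - g (\<psi> z)"] by simp
        also have "\<dots> \<le> sup_dist \<Omega> f g"
        proof (rule norm_le_sup_dist)
          show "continuous_on (closure \<Omega>) f" "continuous_on (closure \<Omega>) g"
            using f g(1) by (simp_all add: A_alg_def)
          show "\<psi> z \<in> closure \<Omega>" using \<psi>(2) \<open>z \<in> sphere 0 1\<close> by blast
        qed fact
        finally show "\<bar>Re (g (\<psi> z)) - Re (f (\<psi> z))\<bar> < \<epsilon>"
          using g(2) abs_minus_commute[of "Re (g (\<psi> z))" "Re (f (\<psi> z))"] by linarith
      qed
      have "(\<lambda>z. Re (g (\<psi> z))) \<in> D_set k"
        using stable trace_cont[OF g(1)] close by blast
      with g(1) show ?thesis by simp
    qed
    with \<open>\<epsilon> > 0\<close> show ?thesis by blast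
  qed
  then show ?thesis unfolding open_in_A_def by (intro conjI ballI) auto
qed

lemma frontier_component_complement_subset_closure:
  fixes S :: "'a::real_normed_vector set"
  assumes "open S" "finite (components (- S))" "C \<in> components (- S)"
  shows "frontier C \<subseteq> closure S"
proof
  fix z assume z: "z \<in> frontier C"
  define W where "W = \<Union>(components (- S) - {C})"
  have closed_comp: "closed D" if "D \<in> components (- S)" for D
    using closed_components[OF _ that] \<open>open S\<close> by auto
  then have "closed C" "closed W" using assms(2,3) unfolding W_def by auto
  have cover: "- C \<subseteq> S \<union> W"
  proof
    fix x assume "x \<in> - C"
    show "x \<in> S \<union> W"
    proof (cases "x \<in> S")
      case False
      then obtain D where "D \<in> components (- S)" "x \<in> D"
        using Union_components[of "- S"] by blast
      with \<open>x \<in> - C\<close> show ?thesis unfolding W_def by blast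
    qed simp
  qed
  have "z \<in> closure (- C)" using z by (simp add: frontier_def closure_complement)
  also have "\<dots> \<subseteq> closure S \<union> W"
    using closure_mono[OF cover] \<open>closed W\<close> by (simp add: closure_Un closure_closed)
  finally have "z \<in> closure S \<union> W" .
  moreover have "z \<notin> W"
  proof
    assume "z \<in> W"
    then obtain D where D: "D \<in> components (- S)" "D \<noteq> C" "z \<in> D" unfolding W_def by blast
    have "z \<in> C" using z \<open>closed C\<close> by (simp add: frontier_def closure_closed)
    with D components_nonoverlap[OF D(1) assms(3)] show False by blast
  qed
  ultimately show "z \<in> closure S" by blast
qed

lemma riemann_map_bdd_sphere:
  assumes "riemann_map_bdd \<phi> U"
  shows "continuous_on (sphere 0 1) \<phi>" "\<phi> ` sphere 0 1 = closure U - U"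
proof -
  have sphere: "sphere 0 1 = cball 0 1 - ball (0::complex) 1" by auto
  with assms show "continuous_on (sphere 0 1) \<phi>"
    unfolding riemann_map_bdd_def by (auto intro: continuous_on_subset)
  from assms have "inj_on \<phi> (cball 0 1)" by (simp add: riemann_map_bdd_def)
  then have "\<phi> ` sphere 0 1 = \<phi> ` cball 0 1 - \<phi> ` ball 0 1"
    unfolding sphere by (rule inj_on_image_set_diff) auto
  with assms show "\<phi> ` sphere 0 1 = closure U - U" by (simp add: riemann_map_bdd_def)
qed

lemma riemann_map_unbdd_sphere:
  assumes "riemann_map_unbdd \<phi> p U"
  shows "continuous_on (sphere 0 1) \<phi>" "\<phi> ` sphere 0 1 = closure U - U"
proof -
  have "p \<in> ball 0 1" using assms by (simp add: riemann_map_unbdd_def)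
  then have sphere: "sphere 0 1 = (cball 0 1 - {p}) - (ball 0 1 - {p})" by auto
  with assms show "continuous_on (sphere 0 1) \<phi>"
    unfolding riemann_map_unbdd_def by (auto intro: continuous_on_subset)
  from assms have "inj_on \<phi> (cball 0 1 - {p})" by (simp add: riemann_map_unbdd_def)
  then have "\<phi> ` sphere 0 1 = \<phi> ` (cball 0 1 - {p}) - \<phi> ` (ball 0 1 - {p})"
    unfolding sphere by (rule inj_on_image_set_diff) auto
  with assms show "\<phi> ` sphere 0 1 = closure U - U" by (simp add: riemann_map_unbdd_def)
qed

theorem lemma4p1:
  fixes \<Omega> :: "complex set" and n :: nat
    and \<gamma> :: "nat \<Rightarrow> real \<Rightarrow> complex"
    and V :: "nat \<Rightarrow> complex set"
    and \<phi> :: "nat \<Rightarrow> complex \<Rightarrow> complex" and p :: "nat \<Rightarrow> complex"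
    and k i :: nat
  assumes dom: "open \<Omega>" "connected \<Omega>" "bounded \<Omega>" "\<Omega> \<noteq> {}"
    and jordan: "\<forall>j<n. simple_path (\<gamma> j) \<and> pathfinish (\<gamma> j) = pathstart (\<gamma> j)"
    and disj: "\<forall>j<n. \<forall>l<n. j \<noteq> l \<longrightarrow> path_image (\<gamma> j) \<inter> path_image (\<gamma> l) = {}"
    and bdry: "frontier \<Omega> = (\<Union>j<n. path_image (\<gamma> j))"
    and comps: "components (- \<Omega>) = V ` {..<n}" "inj_on V {..<n}"
    and V0: "\<not> bounded (V 0)"
    and rm0: "riemann_map_bdd (\<phi> 0) (- V 0)"
    and rmi: "\<forall>j. 1 \<le> j \<and> j < n \<longrightarrow> riemann_map_unbdd (\<phi> j) (p j) (- V j)"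
    and k: "k \<ge> 1" and i: "i < n"
  shows "open_in_A \<Omega> {f \<in> A_alg \<Omega>. (\<lambda>z. Re (f (\<phi> i z))) \<in> D_set k}"
proof -
  have "V i \<in> components (- \<Omega>)" "finite (components (- \<Omega>))" using comps(1) i by auto
  then have "closed (V i)" and frontier: "frontier (V i) \<subseteq> closure \<Omega>"
    using closed_components[of "- \<Omega>"] frontier_component_complement_subset_closure[of \<Omega>] dom(1)
    by auto
  have "continuous_on (sphere 0 1) (\<phi> i) \<and> \<phi> i ` sphere 0 1 = closure (- V i) - (- V i)"
  proof (cases "i = 0")
    case True
    with riemann_map_bdd_sphere[OF rm0] show ?thesis by simp
  next
    case False
    with rmi i have "riemann_map_unbdd (\<phi> i) (p i) (- V i)" by simp
    with riemann_map_unbdd_sphere show ?thesis by blast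
  qed
  moreover have "closure (- V i) - (- V i) = frontier (V i)"
    using \<open>closed (V i)\<close> by (auto simp: frontier_closures closure_closed)
  ultimately show ?thesis
    using frontier dom(3) by (intro open_in_A_Re_trace_D_set) auto
qed

end
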